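(* Let $\eta\in\mathbb{R}$ with $\eta^2<2$, $h>0$, $x_0\in\mathbb{R}$, and let $(\Delta W_n)_{n\ge0}$ and $(\Delta\tilde W_n)_{n\ge0}$ be mutually independent sequences of i.i.d. $\mathcal{N}(0,h)$ random variables. For $f(x)=-x$, $g(x)=1+\eta x$ and $F(x)=f(x)-\tfrac12g'(x)g(x)$, define the three-stage Runge--Kutta iterates $$x_{n+1}=x_n+\tfrac14(F_1+3F_3)h+\tfrac14(G_1+3G_3)\Delta W_n+\tfrac{1}{2\sqrt3}\Big(f'(x_n)g(x_n)-g'(x_n)f(x_n)-\tfrac12g''(x_n)g(x_n)^2\Big)h\,\Delta\tilde W_n,$$ where $F_1=F(x_n)$, $G_1=g(x_n)$, $F_2=F(Y_2)$, $G_2=g(Y_2)$ with $Y_2=x_n+\tfrac13F_1h+\tfrac13G_1\Delta W_n$, and $F_3=F(Y_3)$, $G_3=g(Y_3)$ with $Y_3=x_n+\tfrac23F_2h+\tfrac23G_2\Delta W_n$, starting from the deterministic value $x_0$. Let $\mu^{(2)}_n=\mathbb{E}[x_n^2]$. Suppose $\big|1-h+\tfrac18h^2(4-\eta^4)-\tfrac1{48}h^3(2+\eta^2)^3\big|<1$ and $$\Big|1-h(2-\eta^2)+\tfrac14h^2(8-8\eta^2+\eta^4)-\tfrac1{24}h^3(32-36\eta^2+3\eta^6)+\tfrac1{192}h^4(2+\eta^2)^2(28-52\eta^2+27\eta^4)-\tfrac1{96}h^5(2+\eta^2)^4(1-2\eta^2)+\tfrac1{2304}h^6(2+\eta^2)^6\Big|<1.$$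 Then $\mu^{(2)}_n$ converges as $n\to\infty$ to a limit $\mu^{(2)}_\infty(h)$, and $\mu^{(2)}_\infty(h)=\frac{1}{2-\eta^2}+O(h)$ as $h\to0$.
   Context: Here $\Delta W_n,\Delta\tilde W_n$ are independent of $x_0,\dots,x_n$. *)

theory Defs
  imports "HOL-Probability.Probability" "HOL-Library.Landau_Symbols"
begin

definition rk_f :: "real \<Rightarrow> real" where
  "rk_f x = - x"

definition rk_g :: "real \<Rightarrow> real \<Rightarrow> real" where
  "rk_g \<eta> x = 1 + \<eta> * x"

definition rk_F :: "real \<Rightarrow> real \<Rightarrow> real" where
  "rk_F \<eta> x = rk_f x - 1/2 * deriv (rk_g \<eta>) x * rk_g \<eta> x"

definition rk_step :: "real \<Rightarrow> real \<Rightarrow> real \<Rightarrow> real \<Rightarrow> real \<Rightarrow> real" where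
  "rk_step \<eta> h x dW dWt =
     (let F1 = rk_F \<eta> x; G1 = rk_g \<eta> x;
          Y2 = x + 1/3 * F1 * h + 1/3 * G1 * dW;
          F2 = rk_F \<eta> Y2; G2 = rk_g \<eta> Y2;
          Y3 = x + 2/3 * F2 * h + 2/3 * G2 * dW;
          F3 = rk_F \<eta> Y3; G3 = rk_g \<eta> Y3
      in x + 1/4 * (F1 + 3 * F3) * h + 1/4 * (G1 + 3 * G3) * dW
           + 1 / (2 * sqrt 3) *
             (deriv rk_f x * rk_g \<eta> x - deriv (rk_g \<eta>) x * rk_f x
              - 1/2 * deriv (deriv (rk_g \<eta>)) x * (rk_g \<eta> x)^2) * h * dWt)"

primrec rk_iter :: "real \<Rightarrow> real \<Rightarrow> real \<Rightarrow> (nat \<Rightarrow> real) \<Rightarrow> (nat \<Rightarrow> real) \<Rightarrow> nat \<Rightarrow> real" where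
  "rk_iter \<eta> h x0 dW dWt 0 = x0"
| "rk_iter \<eta> h x0 dW dWt (Suc n) = rk_step \<eta> h (rk_iter \<eta> h x0 dW dWt n) (dW n) (dWt n)"

end

theory Submission
  imports Defs
begin

text \<open>
On the test equation the scheme is affine in the state, x(n+1) = a x(n) + b, where a and b are
polynomials in the current increments (cubic in the Brownian one) and x(n) is independent of
those increments. Hence m(n) = E x(n) and s(n) = E x(n)^2 obey m(n+1) = A1 m(n) + B1 and
s(n+1) = A2 s(n) + C m(n) + D with A1 = E a, A2 = E a^2, B1 = E b, C = 2 E (a b) and D = E b^2.
Gaussian moments up to order six make these coefficients explicit; the two hypotheses of the
theorem are |A1| < 1 and |A2| < 1, so s(n) tends to (C B1 / (1 - A1) + D) / (1 - A2). Each of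
1 - A1, B1, C, D and 1 - A2 is h times a polynomial in h; after cancelling h the limit is a
rational function of h that is regular at h = 0, where it equals 1 / (2 - \<eta>^2).
\<close>

section \<open>Gaussian moments of cubic polynomials\<close>

lemma (in prob_space) centered_normal_power_integral:
  assumes X: "distributed M lborel X (normal_density 0 (sqrt v))" and v: "0 < v"
  shows "has_bochner_integral M (\<lambda>\<omega>. X \<omega> ^ (2 * k)) (fact (2 * k) / (2 ^ k * fact k) * v ^ k)"
    and "has_bochner_integral M (\<lambda>\<omega>. X \<omega> ^ (2 * k + 1)) 0"
proof -
  have \<sigma>: "0 < sqrt v" using v by simp
  have moment: "has_bochner_integral M (\<lambda>\<omega>. X \<omega> ^ j) (\<integral>x. normal_density 0 (sqrt v) x * x ^ j \<partial>lborel)" for j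
  proof -
    have "integrable lborel (\<lambda>x. normal_density 0 (sqrt v) x * x ^ j)"
      using integrable_normal_moment[where \<mu>=0 and \<sigma>="sqrt v" and k=j] \<sigma> by simp
    then show ?thesis
      using distributed_integrable[OF X, of "\<lambda>x. x ^ j"] distributed_integral[OF X, of "\<lambda>x. x ^ j"]
      by (simp add: has_bochner_integral_iff)
  qed
  have "(\<integral>x. normal_density 0 (sqrt v) x * x ^ (2 * k) \<partial>lborel) = fact (2 * k) / ((2 / v) ^ k * fact k)"
    using integral_normal_moment_even[where \<mu>=0 and \<sigma>="sqrt v" and k=k] v by simp
  also have "\<dots> = fact (2 * k) / (2 ^ k * fact k) * v ^ k"
    using v by (simp add: power_divide field_simps)
  finally show "has_bochner_integral M (\<lambda>\<omega>. X \<omega> ^ (2 * k)) (fact (2 * k) / (2 ^ k * fact k) * v ^ k)"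
    using moment[of "2 * k"] by simp
  show "has_bochner_integral M (\<lambda>\<omega>. X \<omega> ^ (2 * k + 1)) 0"
    using moment[of "2 * k + 1"] integral_normal_moment_odd[where \<mu>=0 and \<sigma>="sqrt v" and k=k] \<sigma> by simp
qed

definition cubic :: "(nat \<Rightarrow> real) \<Rightarrow> real \<Rightarrow> real" where
  "cubic c u = c 0 + c 1 * u + c 2 * u^2 + c 3 * u^3"

definition normal_cubic_pairing :: "real \<Rightarrow> (nat \<Rightarrow> real) \<Rightarrow> (nat \<Rightarrow> real) \<Rightarrow> real" where
  "normal_cubic_pairing v p q =
     p 0 * q 2 + p 1 * q 1 + p 2 * q 0 + 3 * v * (p 1 * q 3 + p 2 * q 2 + p 3 * q 1)
     + 15 * v^2 * p 3 * q 3"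

lemma (in prob_space) normal_cubic_product_integral:
  assumes X: "distributed M lborel X (normal_density 0 (sqrt v))" and v: "0 < v"
  shows "has_bochner_integral M (\<lambda>\<omega>. cubic p (X \<omega>) * cubic q (X \<omega>))
           (p 0 * q 0 + v * normal_cubic_pairing v p q)"
proof -
  note even = centered_normal_power_integral(1)[OF X v] and odd = centered_normal_power_integral(2)[OF X v]
  have m0: "has_bochner_integral M (\<lambda>\<omega>. X \<omega> ^ 0) 1" using even[of 0] by simp
  have m1: "has_bochner_integral M (\<lambda>\<omega>. X \<omega> ^ 1) 0" using odd[of 0] by simp
  have m2: "has_bochner_integral M (\<lambda>\<omega>. X \<omega> ^ 2) v" using even[of 1] by simp
  have m3: "has_bochner_integral M (\<lambda>\<omega>. X \<omega> ^ 3) 0" using odd[of 1] by (simp add: numeral_eq_Suc)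
  have m4: "has_bochner_integral M (\<lambda>\<omega>. X \<omega> ^ 4) (3 * v^2)"
    using even[of 2] by (simp add: fact_numeral)
  have m5: "has_bochner_integral M (\<lambda>\<omega>. X \<omega> ^ 5) 0" using odd[of 2] by (simp add: numeral_eq_Suc)
  have m6: "has_bochner_integral M (\<lambda>\<omega>. X \<omega> ^ 6) (15 * v^3)"
    using even[of 3] by (simp add: fact_numeral)
  have "has_bochner_integral M
      (\<lambda>\<omega>. (p 0 * q 0) * X \<omega> ^ 0 + (p 0 * q 1 + p 1 * q 0) * X \<omega> ^ 1
         + (p 0 * q 2 + p 1 * q 1 + p 2 * q 0) * X \<omega> ^ 2
         + (p 0 * q 3 + p 1 * q 2 + p 2 * q 1 + p 3 * q 0) * X \<omega> ^ 3
         + (p 1 * q 3 + p 2 * q 2 + p 3 * q 1) * X \<omega> ^ 4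
         + (p 2 * q 3 + p 3 * q 2) * X \<omega> ^ 5 + (p 3 * q 3) * X \<omega> ^ 6)
      ((p 0 * q 0) * 1 + (p 0 * q 1 + p 1 * q 0) * 0 + (p 0 * q 2 + p 1 * q 1 + p 2 * q 0) * v
         + (p 0 * q 3 + p 1 * q 2 + p 2 * q 1 + p 3 * q 0) * 0
         + (p 1 * q 3 + p 2 * q 2 + p 3 * q 1) * (3 * v^2)
         + (p 2 * q 3 + p 3 * q 2) * 0 + (p 3 * q 3) * (15 * v^3))"
    by (intro has_bochner_integral_add has_bochner_integral_mult_right m0 m1 m2 m3 m4 m5 m6)
  then show ?thesis
    by (rule has_bochner_integral_cong[THEN iffD1, rotated 3])
       (simp_all add: cubic_def normal_cubic_pairing_def algebra_simps eval_nat_numeral)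
qed

lemma (in prob_space) normal_cubic_integral:
  assumes X: "distributed M lborel X (normal_density 0 (sqrt v))" and v: "0 < v"
  shows "has_bochner_integral M (\<lambda>\<omega>. cubic p (X \<omega>)) (p 0 + v * p 2)"
  using normal_cubic_product_integral[OF X v, of p "\<lambda>k. if k = 0 then 1 else 0"]
  by (simp add: cubic_def normal_cubic_pairing_def)

section \<open>Affine recursions with independent coefficients\<close>

lemma (in prob_space) has_bochner_integral_indep_mult:
  fixes X Y :: "'a \<Rightarrow> real"
  assumes indep: "indep_var borel X borel Y"
    and X: "has_bochner_integral M X a" and Y: "has_bochner_integral M Y b"
  shows "has_bochner_integral M (\<lambda>\<omega>. X \<omega> * Y \<omega>) (a * b)"
proof -
  have int: "integrable M X" "integrable M Y" and "expectation X = a" "expectation Y = b"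
    using X Y by (auto simp: has_bochner_integral_iff)
  then show ?thesis
    using indep_var_lebesgue_integral[OF indep int] indep_var_integrable[OF indep int]
    by (simp add: has_bochner_integral_iff)
qed

lemma (in prob_space) indep_affine_step_moments:
  fixes X A B :: "'a \<Rightarrow> real"
  \<comment> \<open>X is independent of the pair (A, B); stated through test functions because
    \<open>indep_var\<close> requires both variables to have the same range\<close>
  assumes indep: "\<And>(f :: real \<Rightarrow> real) (g :: real \<times> real \<Rightarrow> real).
      f \<in> borel_measurable borel \<Longrightarrow> g \<in> borel_measurable (borel \<Otimes>\<^sub>M borel) \<Longrightarrow>
      indep_var borel (\<lambda>\<omega>. f (X \<omega>)) borel (\<lambda>\<omega>. g (A \<omega>, B \<omega>))"
    and X1: "has_bochner_integral M X m1" and X2: "has_bochner_integral M (\<lambda>\<omega>. X \<omega> ^ 2) m2"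
    and A1: "has_bochner_integral M A \<alpha>" and A2: "has_bochner_integral M (\<lambda>\<omega>. A \<omega> ^ 2) \<alpha>2"
    and AB: "has_bochner_integral M (\<lambda>\<omega>. 2 * A \<omega> * B \<omega>) \<gamma>"
    and B1: "has_bochner_integral M B \<beta>" and B2: "has_bochner_integral M (\<lambda>\<omega>. B \<omega> ^ 2) \<delta>"
  shows "has_bochner_integral M (\<lambda>\<omega>. A \<omega> * X \<omega> + B \<omega>) (\<alpha> * m1 + \<beta>)"
    and "has_bochner_integral M (\<lambda>\<omega>. (A \<omega> * X \<omega> + B \<omega>) ^ 2) (\<alpha>2 * m2 + \<gamma> * m1 + \<delta>)"
proof -
  have "(\<lambda>x. x ^ 2 :: real) \<in> borel_measurable borel"
    "(\<lambda>p. fst p ^ 2 :: real) \<in> borel_measurable (borel \<Otimes>\<^sub>M borel)"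
    "(\<lambda>p. 2 * fst p * snd p :: real) \<in> borel_measurable (borel \<Otimes>\<^sub>M borel)"
    by measurable
  then have indep_A: "indep_var borel X borel A"
    and indep_A2: "indep_var borel (\<lambda>\<omega>. X \<omega> ^ 2) borel (\<lambda>\<omega>. A \<omega> ^ 2)"
    and indep_AB: "indep_var borel X borel (\<lambda>\<omega>. 2 * A \<omega> * B \<omega>)"
    using indep[of "\<lambda>x. x" fst] indep[of "\<lambda>x. x ^ 2" "\<lambda>p. fst p ^ 2"]
      indep[of "\<lambda>x. x" "\<lambda>p. 2 * fst p * snd p"]
    by simp_all
  have "has_bochner_integral M (\<lambda>\<omega>. A \<omega> * X \<omega>) (\<alpha> * m1)"
    using has_bochner_integral_indep_mult[OF indep_A X1 A1] by (simp add: mult.commute)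
  then show "has_bochner_integral M (\<lambda>\<omega>. A \<omega> * X \<omega> + B \<omega>) (\<alpha> * m1 + \<beta>)"
    using B1 by (rule has_bochner_integral_add)
  have "has_bochner_integral M (\<lambda>\<omega>. A \<omega> ^ 2 * X \<omega> ^ 2) (\<alpha>2 * m2)"
    using has_bochner_integral_indep_mult[OF indep_A2 X2 A2] by (simp add: mult.commute)
  moreover have "has_bochner_integral M (\<lambda>\<omega>. 2 * A \<omega> * B \<omega> * X \<omega>) (\<gamma> * m1)"
    using has_bochner_integral_indep_mult[OF indep_AB X1 AB] by (simp add: mult.commute)
  ultimately have "has_bochner_integral M
      (\<lambda>\<omega>. A \<omega> ^ 2 * X \<omega> ^ 2 + 2 * A \<omega> * B \<omega> * X \<omega> + B \<omega> ^ 2) (\<alpha>2 * m2 + \<gamma> * m1 + \<delta>)"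
    using B2 by (intro has_bochner_integral_add)
  then show "has_bochner_integral M (\<lambda>\<omega>. (A \<omega> * X \<omega> + B \<omega>) ^ 2) (\<alpha>2 * m2 + \<gamma> * m1 + \<delta>)"
    by (simp add: power2_sum power_mult_distrib algebra_simps)
qed

lemma affine_recurrence_tendsto_zero:
  fixes e g :: "nat \<Rightarrow> real"
  assumes A: "\<bar>A\<bar> < 1" and g: "g \<longlonglongrightarrow> 0" and rec: "\<And>n. e (Suc n) = A * e n + g n"
  shows "e \<longlonglongrightarrow> 0"
proof (rule LIMSEQ_I)
  fix r :: real assume r: "0 < r"
  define q where "q = \<bar>A\<bar>"
  have q: "0 \<le> q" "q < 1" using A by (auto simp: q_def)
  obtain N where N: "\<And>n. n \<ge> N \<Longrightarrow> \<bar>g n\<bar> < r * (1 - q) / 2"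
    using LIMSEQ_D[OF g, of "r * (1 - q) / 2"] r q by auto
  have bound: "\<bar>e (N + k)\<bar> \<le> q ^ k * \<bar>e N\<bar> + r / 2" for k
  proof (induction k)
    case 0 then show ?case using r by simp
  next
    case (Suc k)
    have "\<bar>e (N + Suc k)\<bar> \<le> q * \<bar>e (N + k)\<bar> + \<bar>g (N + k)\<bar>"
      using abs_triangle_ineq[of "A * e (N + k)" "g (N + k)"] by (simp add: rec q_def abs_mult)
    also have "\<dots> \<le> q * (q ^ k * \<bar>e N\<bar> + r / 2) + r * (1 - q) / 2"
      using N[of "N + k"] Suc q by (intro add_mono mult_left_mono) auto
    also have "\<dots> = q ^ Suc k * \<bar>e N\<bar> + r / 2" by (simp add: field_simps)
    finally show ?case .
  qed
  have "(\<lambda>k. q ^ k * \<bar>e N\<bar>) \<longlonglongrightarrow> 0"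
    using LIMSEQ_power_zero[of q] q by (auto intro: tendsto_mult_left_zero)
  then obtain K where K: "\<And>k. k \<ge> K \<Longrightarrow> q ^ k * \<bar>e N\<bar> < r / 2"
    using LIMSEQ_D[of _ 0 "r / 2"] r q by fastforce
  have "\<bar>e n\<bar> < r" if "n \<ge> N + K" for n
  proof -
    have "\<bar>e n\<bar> \<le> q ^ (n - N) * \<bar>e N\<bar> + r / 2" "q ^ (n - N) * \<bar>e N\<bar> < r / 2"
      using bound[of "n - N"] K[of "n - N"] that by auto
    then show ?thesis by linarith
  qed
  then show "\<exists>n0. \<forall>n\<ge>n0. norm (e n - 0) < r" by auto
qed

lemma affine_recurrence_tendsto:
  fixes s f :: "nat \<Rightarrow> real"
  assumes A: "\<bar>A\<bar> < 1" and f: "f \<longlonglongrightarrow> L" and rec: "\<And>n. s (Suc n) = A * s n + f n"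
  shows "s \<longlonglongrightarrow> L / (1 - A)"
proof -
  have "(\<lambda>n. s n - L / (1 - A)) \<longlonglongrightarrow> 0"
  proof (rule affine_recurrence_tendsto_zero[OF A])
    show "(\<lambda>n. f n - L) \<longlonglongrightarrow> 0"
      using f by (rule LIM_zero)
    show "s (Suc n) - L / (1 - A) = A * (s n - L / (1 - A)) + (f n - L)" for n
      using A by (simp add: rec field_simps)
  qed
  then show ?thesis
    by (rule LIM_zero_cancel)
qed

section \<open>Behaviour as the step size tends to zero\<close>

lemma bigo_at_right_of_field_differentiable:
  fixes f :: "real \<Rightarrow> real"
  assumes "f field_differentiable at 0"
  shows "(\<lambda>h. f h - f 0) \<in> O[at_right 0](\<lambda>h. h)"
proof -
  obtain D where "(f has_field_derivative D) (at 0)"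
    using assms unfolding field_differentiable_def by blast
  then have "((\<lambda>h. (f h - f 0) / h) \<longlongrightarrow> D) (at 0)"
    unfolding has_field_derivative_iff by simp
  then have "((\<lambda>h. (f h - f 0) / h) \<longlongrightarrow> D) (at_right 0)"
    by (rule filterlim_mono) (simp_all add: at_le)
  then show ?thesis
    by (rule bigoI_tendsto) (use eventually_at_right_less[of 0] in \<open>auto elim: eventually_mono\<close>)
qed

lemma stationary_moment_bigo:
  fixes p1 p2 q1 q2 q3 :: "real \<Rightarrow> real"
  assumes diff: "p1 field_differentiable at 0" "p2 field_differentiable at 0"
      "q1 field_differentiable at 0" "q2 field_differentiable at 0" "q3 field_differentiable at 0"
    and nz: "p1 0 \<noteq> 0" "p2 0 \<noteq> 0" and q1: "q1 0 = 0"
  shows "(\<lambda>h. (h * q2 h * (h * q1 h / (h * p1 h)) + h * q3 h) / (h * p2 h) - q3 0 / p2 0)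
           \<in> O[at_right 0](\<lambda>h. h)"
proof -
  define \<rho> where "\<rho> h = (q2 h * (q1 h / p1 h) + q3 h) / p2 h" for h
  have "\<rho> field_differentiable at 0"
    unfolding \<rho>_def[abs_def] using diff nz
    by (intro field_differentiable_divide field_differentiable_add field_differentiable_mult
        field_differentiable_ident) auto
  then have "(\<lambda>h. \<rho> h - \<rho> 0) \<in> O[at_right 0](\<lambda>h. h)"
    by (rule bigo_at_right_of_field_differentiable)
  then have bigo: "(\<lambda>h. \<rho> h - q3 0 / p2 0) \<in> O[at_right 0](\<lambda>h. h)"
    using q1 by (simp add: \<rho>_def)
  have eq: "\<forall>\<^sub>F h in at_right 0. \<rho> h - q3 0 / p2 0 =
      (h * q2 h * (h * q1 h / (h * p1 h)) + h * q3 h) / (h * p2 h) - q3 0 / p2 0"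
  proof -
    have "\<forall>\<^sub>F h in at 0. p1 h \<noteq> 0"
      using field_differentiable_imp_continuous_at[OF diff(1)] nz(1)
      by (auto simp: isCont_def intro: tendsto_imp_eventually_ne)
    then have "\<forall>\<^sub>F h in at_right 0. p1 h \<noteq> 0"
      by (rule filter_leD[OF at_le, rotated]) simp
    then show ?thesis
      using eventually_at_right_less[of 0] by eventually_elim (auto simp: \<rho>_def field_split_simps)
  qed
  show ?thesis
    using landau_o.big.in_cong[OF eq] bigo by simp
qed

section \<open>The scheme on the test equation\<close>

text \<open>
With F y = -(1 + \<eta>^2/2) y - \<eta>/2 and g y = 1 + \<eta> y, one stage of the scheme adds
F y h + g y u = l y + (u - \<eta> h/2), where l = \<open>rk_rate \<eta> h u\<close>. Composing the three stages
produces the factor \<open>phi_taylor l\<close>, the Taylor polynomial of (exp l - 1)/l, and the correction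
term equals -h w/(2 sqrt 3) because f' g - g' f - g'' g^2/2 = -1.
\<close>

definition phi_taylor :: "real \<Rightarrow> real" where
  "phi_taylor l = 1 + l / 2 + l^2 / 6"

definition rk_rate :: "real \<Rightarrow> real \<Rightarrow> real \<Rightarrow> real" where
  "rk_rate \<eta> h u = \<eta> * u - (1 + \<eta>^2 / 2) * h"

definition rk_gain :: "real \<Rightarrow> real \<Rightarrow> real \<Rightarrow> real" where
  "rk_gain \<eta> h u = 1 + rk_rate \<eta> h u * phi_taylor (rk_rate \<eta> h u)"

definition rk_shift :: "real \<Rightarrow> real \<Rightarrow> real \<Rightarrow> real \<Rightarrow> real" where
  "rk_shift \<eta> h u w = (u - \<eta> * h / 2) * phi_taylor (rk_rate \<eta> h u) - h / (2 * sqrt 3) * w"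

lemma borel_measurable_rk_gain [measurable (raw)]:
  assumes [measurable]: "f \<in> borel_measurable M"
  shows "(\<lambda>x. rk_gain \<eta> h (f x)) \<in> borel_measurable M"
  unfolding rk_gain_def rk_rate_def phi_taylor_def by measurable

lemma borel_measurable_rk_shift [measurable (raw)]:
  assumes [measurable]: "f \<in> borel_measurable M" "g \<in> borel_measurable M"
  shows "(\<lambda>x. rk_shift \<eta> h (f x) (g x)) \<in> borel_measurable M"
  unfolding rk_shift_def rk_rate_def phi_taylor_def by measurable

lemma deriv_rk_f: "deriv rk_f x = -1"
  unfolding rk_f_def by (rule DERIV_imp_deriv) (auto intro!: derivative_eq_intros)

lemma deriv_rk_g: "deriv (rk_g \<eta>) = (\<lambda>_. \<eta>)"
  unfolding rk_g_def by (rule ext, rule DERIV_imp_deriv) (auto intro!: derivative_eq_intros)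

lemma rk_F_eq: "rk_F \<eta> y = - (1 + \<eta>^2 / 2) * y - \<eta> / 2"
  unfolding rk_F_def deriv_rk_g rk_f_def rk_g_def by (simp add: algebra_simps power2_eq_square)

lemma rk_step_affine: "rk_step \<eta> h x u w = rk_gain \<eta> h u * x + rk_shift \<eta> h u w"
proof -
  define Y2 where "Y2 = x + 1/3 * rk_F \<eta> x * h + 1/3 * rk_g \<eta> x * u"
  define Y3 where "Y3 = x + 2/3 * rk_F \<eta> Y2 * h + 2/3 * rk_g \<eta> Y2 * u"
  have "rk_step \<eta> h x u w =
      x + 1/4 * (rk_F \<eta> x + 3 * rk_F \<eta> Y3) * h + 1/4 * (rk_g \<eta> x + 3 * rk_g \<eta> Y3) * u
        - h / (2 * sqrt 3) * w"
    unfolding rk_step_def Let_def deriv_rk_f deriv_rk_g deriv_const Y2_def[symmetric] Y3_def[symmetric]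
    by (simp add: rk_f_def rk_g_def algebra_simps)
  also have "x + 1/4 * (rk_F \<eta> x + 3 * rk_F \<eta> Y3) * h + 1/4 * (rk_g \<eta> x + 3 * rk_g \<eta> Y3) * u
      = rk_gain \<eta> h u * x + (u - \<eta> * h / 2) * phi_taylor (rk_rate \<eta> h u)"
    unfolding Y3_def Y2_def rk_F_eq rk_g_def rk_gain_def rk_rate_def phi_taylor_def
    by (simp add: field_simps power2_eq_square)
  finally show ?thesis
    by (simp add: rk_shift_def)
qed

definition rk_gain_coeff :: "real \<Rightarrow> real \<Rightarrow> nat \<Rightarrow> real" where
  "rk_gain_coeff \<eta> h = (let l = - (1 + \<eta>^2 / 2) * h in
     (!) [1 + l * phi_taylor l, \<eta> * (1 + l + l^2 / 2), \<eta>^2 / 2 * (1 + l), \<eta>^3 / 6])"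

definition rk_shift_coeff :: "real \<Rightarrow> real \<Rightarrow> nat \<Rightarrow> real" where
  "rk_shift_coeff \<eta> h = (let l = - (1 + \<eta>^2 / 2) * h in
     (!) [- \<eta> * h / 2 * phi_taylor l, phi_taylor l - \<eta>^2 * h / 2 * (1 / 2 + l / 3),
          \<eta> * (1 / 2 + l / 3) - \<eta>^3 * h / 12, \<eta>^2 / 6])"

lemma rk_gain_coeff_values:
  fixes \<eta> h :: real
  defines "l \<equiv> - (1 + \<eta>^2 / 2) * h"
  shows "rk_gain_coeff \<eta> h 0 = 1 + l * phi_taylor l" "rk_gain_coeff \<eta> h 1 = \<eta> * (1 + l + l^2 / 2)"
    "rk_gain_coeff \<eta> h 2 = \<eta>^2 / 2 * (1 + l)" "rk_gain_coeff \<eta> h 3 = \<eta>^3 / 6"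
  by (simp_all add: rk_gain_coeff_def Let_def l_def)

lemma rk_shift_coeff_values:
  fixes \<eta> h :: real
  defines "l \<equiv> - (1 + \<eta>^2 / 2) * h"
  shows "rk_shift_coeff \<eta> h 0 = - \<eta> * h / 2 * phi_taylor l"
    "rk_shift_coeff \<eta> h 1 = phi_taylor l - \<eta>^2 * h / 2 * (1 / 2 + l / 3)"
    "rk_shift_coeff \<eta> h 2 = \<eta> * (1 / 2 + l / 3) - \<eta>^3 * h / 12" "rk_shift_coeff \<eta> h 3 = \<eta>^2 / 6"
  by (simp_all add: rk_shift_coeff_def Let_def l_def)

lemma rk_gain_cubic: "rk_gain \<eta> h u = cubic (rk_gain_coeff \<eta> h) u"
  unfolding rk_gain_def rk_rate_def cubic_def rk_gain_coeff_values phi_taylor_def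
  by (simp add: field_simps power2_eq_square power3_eq_cube)

lemma rk_shift_cubic: "rk_shift \<eta> h u w = cubic (rk_shift_coeff \<eta> h) u - h / (2 * sqrt 3) * w"
  unfolding rk_shift_def rk_rate_def cubic_def rk_shift_coeff_values phi_taylor_def
  by (simp add: field_simps power2_eq_square power3_eq_cube)

definition rk_mean_gain :: "real \<Rightarrow> real \<Rightarrow> real" where
  "rk_mean_gain \<eta> h = rk_gain_coeff \<eta> h 0 + h * rk_gain_coeff \<eta> h 2"

definition rk_mean_shift :: "real \<Rightarrow> real \<Rightarrow> real" where
  "rk_mean_shift \<eta> h = rk_shift_coeff \<eta> h 0 + h * rk_shift_coeff \<eta> h 2"

definition rk_sq_gain :: "real \<Rightarrow> real \<Rightarrow> real" where
  "rk_sq_gain \<eta> h =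
     (rk_gain_coeff \<eta> h 0)^2 + h * normal_cubic_pairing h (rk_gain_coeff \<eta> h) (rk_gain_coeff \<eta> h)"

definition rk_cross :: "real \<Rightarrow> real \<Rightarrow> real" where
  "rk_cross \<eta> h = 2 * (rk_gain_coeff \<eta> h 0 * rk_shift_coeff \<eta> h 0
     + h * normal_cubic_pairing h (rk_gain_coeff \<eta> h) (rk_shift_coeff \<eta> h))"

definition rk_sq_shift :: "real \<Rightarrow> real \<Rightarrow> real" where
  "rk_sq_shift \<eta> h = (rk_shift_coeff \<eta> h 0)^2
     + h * normal_cubic_pairing h (rk_shift_coeff \<eta> h) (rk_shift_coeff \<eta> h) + h^3 / 12"

lemma rk_mean_gain_eq:
  "rk_mean_gain \<eta> h = 1 - h + 1/8 * h^2 * (4 - \<eta>^4) - 1/48 * h^3 * (2 + \<eta>^2)^3"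
  unfolding rk_mean_gain_def rk_gain_coeff_values phi_taylor_def
  by (simp add: field_simps eval_nat_numeral)

lemma rk_sq_gain_eq:
  "rk_sq_gain \<eta> h = 1 - h * (2 - \<eta>^2) + 1/4 * h^2 * (8 - 8 * \<eta>^2 + \<eta>^4)
     - 1/24 * h^3 * (32 - 36 * \<eta>^2 + 3 * \<eta>^6)
     + 1/192 * h^4 * (2 + \<eta>^2)^2 * (28 - 52 * \<eta>^2 + 27 * \<eta>^4)
     - 1/96 * h^5 * (2 + \<eta>^2)^4 * (1 - 2 * \<eta>^2)
     + 1/2304 * h^6 * (2 + \<eta>^2)^6"
  unfolding rk_sq_gain_def normal_cubic_pairing_def rk_gain_coeff_values phi_taylor_def
  by (simp add: field_simps eval_nat_numeral)

lemma (in prob_space) rk_increment_moments: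
  assumes h: "0 < h"
    and U: "distributed M lborel U (normal_density 0 (sqrt h))"
    and W: "distributed M lborel W (normal_density 0 (sqrt h))"
    and UW: "indep_var borel U borel W"
  shows "has_bochner_integral M (\<lambda>\<omega>. rk_gain \<eta> h (U \<omega>)) (rk_mean_gain \<eta> h)"
    and "has_bochner_integral M (\<lambda>\<omega>. rk_gain \<eta> h (U \<omega>) ^ 2) (rk_sq_gain \<eta> h)"
    and "has_bochner_integral M (\<lambda>\<omega>. 2 * rk_gain \<eta> h (U \<omega>) * rk_shift \<eta> h (U \<omega>) (W \<omega>))
           (rk_cross \<eta> h)"
    and "has_bochner_integral M (\<lambda>\<omega>. rk_shift \<eta> h (U \<omega>) (W \<omega>)) (rk_mean_shift \<eta> h)"
    and "has_bochner_integral M (\<lambda>\<omega>. rk_shift \<eta> h (U \<omega>) (W \<omega>) ^ 2) (rk_sq_shift \<eta> h)"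
proof -
  let ?a = "rk_gain_coeff \<eta> h" and ?b = "rk_shift_coeff \<eta> h" and ?c = "h / (2 * sqrt 3)"
  have W1: "has_bochner_integral M W 0"
    using centered_normal_power_integral(2)[OF W h, of 0] by simp
  have W2: "has_bochner_integral M (\<lambda>\<omega>. W \<omega> ^ 2) h"
    using centered_normal_power_integral(1)[OF W h, of 1] by simp
  have cubic_W: "has_bochner_integral M (\<lambda>\<omega>. cubic p (U \<omega>) * W \<omega>) 0" for p
  proof -
    have "cubic p \<in> borel_measurable borel"
      unfolding cubic_def[abs_def] by measurable
    then have "indep_var borel (cubic p \<circ> U) borel (id \<circ> W)"
      by (rule indep_var_compose[OF UW]) simp
    then show ?thesis
      using has_bochner_integral_indep_mult[OF _ normal_cubic_integral[OF U h] W1] by (simp add: comp_def)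
  qed
  note product = normal_cubic_product_integral[OF U h]
  show "has_bochner_integral M (\<lambda>\<omega>. rk_gain \<eta> h (U \<omega>)) (rk_mean_gain \<eta> h)"
    using normal_cubic_integral[OF U h, of ?a] by (simp add: rk_gain_cubic rk_mean_gain_def)
  show "has_bochner_integral M (\<lambda>\<omega>. rk_gain \<eta> h (U \<omega>) ^ 2) (rk_sq_gain \<eta> h)"
    using product[of ?a ?a] by (simp add: rk_gain_cubic rk_sq_gain_def power2_eq_square)
  show "has_bochner_integral M (\<lambda>\<omega>. rk_shift \<eta> h (U \<omega>) (W \<omega>)) (rk_mean_shift \<eta> h)"
    using has_bochner_integral_diff[OF normal_cubic_integral[OF U h, of ?b]
        has_bochner_integral_mult_right[OF W1, of ?c]]
    by (simp add: rk_shift_cubic rk_mean_shift_def)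
  have "has_bochner_integral M
      (\<lambda>\<omega>. 2 * (cubic ?a (U \<omega>) * cubic ?b (U \<omega>)) - 2 * ?c * (cubic ?a (U \<omega>) * W \<omega>))
      (2 * (?a 0 * ?b 0 + h * normal_cubic_pairing h ?a ?b) - 2 * ?c * 0)"
    by (intro has_bochner_integral_diff has_bochner_integral_mult_right product cubic_W)
  then show "has_bochner_integral M (\<lambda>\<omega>. 2 * rk_gain \<eta> h (U \<omega>) * rk_shift \<eta> h (U \<omega>) (W \<omega>))
      (rk_cross \<eta> h)"
    by (simp add: rk_gain_cubic rk_shift_cubic rk_cross_def algebra_simps)
  have "has_bochner_integral M
      (\<lambda>\<omega>. cubic ?b (U \<omega>) * cubic ?b (U \<omega>) - 2 * ?c * (cubic ?b (U \<omega>) * W \<omega>) + ?c^2 * W \<omega> ^ 2)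
      (?b 0 * ?b 0 + h * normal_cubic_pairing h ?b ?b - 2 * ?c * 0 + ?c^2 * h)"
    by (intro has_bochner_integral_add has_bochner_integral_diff has_bochner_integral_mult_right
        product cubic_W W2)
  moreover have "?c^2 * h = h^3 / 12"
    by (simp add: power_divide power_mult_distrib power3_eq_cube power2_eq_square)
  ultimately show "has_bochner_integral M (\<lambda>\<omega>. rk_shift \<eta> h (U \<omega>) (W \<omega>) ^ 2) (rk_sq_shift \<eta> h)"
    by (simp add: rk_shift_cubic rk_sq_shift_def power2_diff power2_eq_square algebra_simps)
qed

definition rk_limit_moment :: "real \<Rightarrow> real \<Rightarrow> real" where
  "rk_limit_moment \<eta> h =
     (rk_cross \<eta> h * (rk_mean_shift \<eta> h / (1 - rk_mean_gain \<eta> h)) + rk_sq_shift \<eta> h)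
     / (1 - rk_sq_gain \<eta> h)"

lemma rk_limit_moment_bigo:
  fixes \<eta> :: real
  assumes "\<eta>^2 < 2"
  shows "(\<lambda>h. rk_limit_moment \<eta> h - 1 / (2 - \<eta>^2)) \<in> O[at_right 0](\<lambda>h. h)"
proof -
  define \<kappa> where "\<kappa> = 1 + \<eta>^2 / 2"
  define \<phi> where "\<phi> h = phi_taylor (- \<kappa> * h)" for h
  let ?a = "rk_gain_coeff \<eta>" and ?b = "rk_shift_coeff \<eta>"
  define p1 where "p1 h = \<kappa> * \<phi> h - ?a h 2" for h
  define q1 where "q1 h = ?b h 2 - \<eta> / 2 * \<phi> h" for h
  define q2 where "q2 h = 2 * (- \<eta> / 2 * \<phi> h * ?a h 0 + normal_cubic_pairing h (?a h) (?b h))" for h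
  define q3 where "q3 h = h * (\<eta> / 2 * \<phi> h)^2 + normal_cubic_pairing h (?b h) (?b h) + h^2 / 12" for h
  define p2 where "p2 h = \<kappa> * \<phi> h * (2 - h * \<kappa> * \<phi> h) - normal_cubic_pairing h (?a h) (?a h)" for h
  \<comment> \<open>a0 - 1 and b0 carry a factor h, as does every Gaussian moment of positive order;
    hence every moment coefficient is divisible by h\<close>
  have a0: "?a h 0 = 1 - h * \<kappa> * \<phi> h" and b0: "?b h 0 = - h * (\<eta> / 2 * \<phi> h)" for h
    by (simp_all add: rk_gain_coeff_values rk_shift_coeff_values \<kappa>_def \<phi>_def algebra_simps)
  have "rk_limit_moment \<eta> h = (h * q2 h * (h * q1 h / (h * p1 h)) + h * q3 h) / (h * p2 h)" for h
  proof -
    have "1 - rk_mean_gain \<eta> h = h * p1 h" "rk_mean_shift \<eta> h = h * q1 h" "rk_cross \<eta> h = h * q2 h"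
      "rk_sq_shift \<eta> h = h * q3 h" "1 - rk_sq_gain \<eta> h = h * p2 h"
      unfolding rk_mean_gain_def rk_mean_shift_def rk_cross_def rk_sq_shift_def rk_sq_gain_def
        p1_def q1_def q2_def q3_def p2_def a0 b0
      by (simp_all add: algebra_simps power2_eq_square power3_eq_cube)
    then show ?thesis
      unfolding rk_limit_moment_def by simp
  qed
  moreover have "p1 0 = 1" "p2 0 = 2 - \<eta>^2" "q1 0 = 0" "q3 0 = 1"
    unfolding p1_def p2_def q1_def q3_def normal_cubic_pairing_def rk_gain_coeff_values rk_shift_coeff_values
    by (simp_all add: \<phi>_def \<kappa>_def phi_taylor_def power2_eq_square)
  moreover have "f field_differentiable at 0" if "f \<in> {p1, p2, q1, q2, q3}" for f
    using that unfolding p1_def[abs_def] p2_def[abs_def] q1_def[abs_def] q2_def[abs_def] q3_def[abs_def]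
      \<phi>_def phi_taylor_def normal_cubic_pairing_def rk_gain_coeff_values rk_shift_coeff_values
    by (auto intro!: derivative_intros)
  ultimately show ?thesis
    using stationary_moment_bigo[of p1 p2 q1 q2 q3] assms by simp
qed

section \<open>Moments of the iterates\<close>

lemma rk_iter_cong:
  "(\<And>k. k < n \<Longrightarrow> d k = d' k) \<Longrightarrow> (\<And>k. k < n \<Longrightarrow> e k = e' k) \<Longrightarrow>
   rk_iter \<eta> h x0 d e n = rk_iter \<eta> h x0 d' e' n"
  by (induction n) auto

lemma rk_iter_measurable:
  assumes "\<And>k. k < n \<Longrightarrow> Inl k \<in> I \<and> Inr k \<in> I"
  shows "(\<lambda>z. rk_iter \<eta> h x0 (\<lambda>k. z (Inl k)) (\<lambda>k. z (Inr k)) n) \<in> borel_measurable (PiM I (\<lambda>_. borel))"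
  using assms
proof (induction n)
  case 0 then show ?case by simp
next
  case (Suc n)
  then have [measurable]: "(\<lambda>z. rk_iter \<eta> h x0 (\<lambda>k. z (Inl k)) (\<lambda>k. z (Inr k)) n) \<in> borel_measurable (PiM I (\<lambda>_. borel))"
    "(\<lambda>z. z (Inl n)) \<in> borel_measurable (PiM I (\<lambda>_. borel))"
    "(\<lambda>z. z (Inr n)) \<in> borel_measurable (PiM I (\<lambda>_. borel))"
    by auto
  show ?case
    unfolding rk_iter.simps rk_step_affine by measurable
qed

locale rk_gaussian_increments = prob_space +
  fixes h :: real and dW dWt :: "nat \<Rightarrow> 'a \<Rightarrow> real"
  assumes step_pos: "0 < h"
    and dW_normal: "\<And>n. distributed M lborel (dW n) (normal_density 0 (sqrt h))"
    and dWt_normal: "\<And>n. distributed M lborel (dWt n) (normal_density 0 (sqrt h))"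
    and increments_indep: "indep_vars (\<lambda>_. borel) (\<lambda>k. case k of Inl n \<Rightarrow> dW n | Inr n \<Rightarrow> dWt n) UNIV"
begin

abbreviation rk_path :: "real \<Rightarrow> real \<Rightarrow> nat \<Rightarrow> 'a \<Rightarrow> real" where
  "rk_path \<eta> x0 n \<omega> \<equiv> rk_iter \<eta> h x0 (\<lambda>k. dW k \<omega>) (\<lambda>k. dWt k \<omega>) n"

lemma increments_indep_var: "indep_var borel (dW n) borel (dWt n)"
proof -
  let ?Z = "\<lambda>k. case k of Inl n \<Rightarrow> dW n | Inr n \<Rightarrow> dWt n"
  have "indep_var (PiM {Inl n} (\<lambda>_. borel)) (\<lambda>\<omega>. restrict (\<lambda>i. ?Z i \<omega>) {Inl n})
      (PiM {Inr n} (\<lambda>_. borel)) (\<lambda>\<omega>. restrict (\<lambda>i. ?Z i \<omega>) {Inr n})"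
    by (rule indep_var_restrict[OF increments_indep]) auto
  then have "indep_var borel ((\<lambda>z. z (Inl n)) \<circ> (\<lambda>\<omega>. restrict (\<lambda>i. ?Z i \<omega>) {Inl n}))
      borel ((\<lambda>z. z (Inr n)) \<circ> (\<lambda>\<omega>. restrict (\<lambda>i. ?Z i \<omega>) {Inr n}))"
    by (rule indep_var_compose) auto
  then show ?thesis
    by (simp add: comp_def)
qed

lemma rk_path_indep_increment:
  assumes f: "f \<in> borel_measurable borel" and g: "g \<in> borel_measurable (borel \<Otimes>\<^sub>M borel)"
  shows "indep_var borel (\<lambda>\<omega>. f (rk_path \<eta> x0 n \<omega>)) borel (\<lambda>\<omega>. g (dW n \<omega>, dWt n \<omega>))"
proof -
  let ?Z = "\<lambda>k. case k of Inl n \<Rightarrow> dW n | Inr n \<Rightarrow> dWt n"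
  let ?past = "Inl ` {..<n} \<union> Inr ` {..<n}" and ?now = "{Inl n, Inr n}"
  have "indep_var (PiM ?past (\<lambda>_. borel)) (\<lambda>\<omega>. restrict (\<lambda>i. ?Z i \<omega>) ?past)
      (PiM ?now (\<lambda>_. borel)) (\<lambda>\<omega>. restrict (\<lambda>i. ?Z i \<omega>) ?now)"
    by (rule indep_var_restrict[OF increments_indep]) auto
  then have "indep_var
      borel ((\<lambda>z. f (rk_iter \<eta> h x0 (\<lambda>k. z (Inl k)) (\<lambda>k. z (Inr k)) n)) \<circ> (\<lambda>\<omega>. restrict (\<lambda>i. ?Z i \<omega>) ?past))
      borel ((\<lambda>z. g (z (Inl n), z (Inr n))) \<circ> (\<lambda>\<omega>. restrict (\<lambda>i. ?Z i \<omega>) ?now))"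
  proof (rule indep_var_compose)
    show "(\<lambda>z. f (rk_iter \<eta> h x0 (\<lambda>k. z (Inl k)) (\<lambda>k. z (Inr k)) n)) \<in> borel_measurable (PiM ?past (\<lambda>_. borel))"
      by (rule measurable_compose[OF rk_iter_measurable f]) auto
    show "(\<lambda>z. g (z (Inl n), z (Inr n))) \<in> borel_measurable (PiM ?now (\<lambda>_. borel))"
      by (rule measurable_compose[OF measurable_Pair g]) auto
  qed
  moreover have "rk_iter \<eta> h x0 (\<lambda>k. restrict (\<lambda>i. ?Z i \<omega>) ?past (Inl k)) (\<lambda>k. restrict (\<lambda>i. ?Z i \<omega>) ?past (Inr k)) n
      = rk_path \<eta> x0 n \<omega>" for \<omega>
    by (rule rk_iter_cong) auto
  ultimately show ?thesis
    by (simp add: comp_def)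
qed

lemma rk_path_step_moments:
  assumes "integrable M (rk_path \<eta> x0 n)" "integrable M (\<lambda>\<omega>. rk_path \<eta> x0 n \<omega> ^ 2)"
  shows "has_bochner_integral M (rk_path \<eta> x0 (Suc n))
           (rk_mean_gain \<eta> h * expectation (rk_path \<eta> x0 n) + rk_mean_shift \<eta> h)"
    and "has_bochner_integral M (\<lambda>\<omega>. rk_path \<eta> x0 (Suc n) \<omega> ^ 2)
           (rk_sq_gain \<eta> h * expectation (\<lambda>\<omega>. rk_path \<eta> x0 n \<omega> ^ 2)
            + rk_cross \<eta> h * expectation (rk_path \<eta> x0 n) + rk_sq_shift \<eta> h)"
proof -
  let ?A = "\<lambda>\<omega>. rk_gain \<eta> h (dW n \<omega>)" and ?B = "\<lambda>\<omega>. rk_shift \<eta> h (dW n \<omega>) (dWt n \<omega>)"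
  have step: "rk_path \<eta> x0 (Suc n) \<omega> = ?A \<omega> * rk_path \<eta> x0 n \<omega> + ?B \<omega>" for \<omega>
    by (simp add: rk_step_affine)
  have indep: "indep_var borel (\<lambda>\<omega>. f (rk_path \<eta> x0 n \<omega>)) borel (\<lambda>\<omega>. g (?A \<omega>, ?B \<omega>))"
    if "f \<in> borel_measurable borel" "g \<in> borel_measurable (borel \<Otimes>\<^sub>M borel)"
    for f :: "real \<Rightarrow> real" and g :: "real \<times> real \<Rightarrow> real"
  proof -
    have [measurable]: "g \<in> borel_measurable (borel \<Otimes>\<^sub>M borel)" by (fact that(2))
    have "(\<lambda>p. g (rk_gain \<eta> h (fst p), rk_shift \<eta> h (fst p) (snd p))) \<in> borel_measurable (borel \<Otimes>\<^sub>M borel)"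
      by measurable
    from rk_path_indep_increment[OF that(1) this] show ?thesis
      by simp
  qed
  note increments =
    rk_increment_moments[OF step_pos dW_normal[of n] dWt_normal[of n] increments_indep_var[of n], where \<eta>=\<eta>]
  note affine = indep_affine_step_moments[OF indep has_bochner_integral_integrable[OF assms(1)]
      has_bochner_integral_integrable[OF assms(2)] increments]
  show "has_bochner_integral M (rk_path \<eta> x0 (Suc n))
      (rk_mean_gain \<eta> h * expectation (rk_path \<eta> x0 n) + rk_mean_shift \<eta> h)"
    using affine(1) by (simp only: step)
  show "has_bochner_integral M (\<lambda>\<omega>. rk_path \<eta> x0 (Suc n) \<omega> ^ 2)
      (rk_sq_gain \<eta> h * expectation (\<lambda>\<omega>. rk_path \<eta> x0 n \<omega> ^ 2)
       + rk_cross \<eta> h * expectation (rk_path \<eta> x0 n) + rk_sq_shift \<eta> h)"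
    using affine(2) by (simp only: step)
qed

lemma rk_path_integrable:
  "integrable M (rk_path \<eta> x0 n) \<and> integrable M (\<lambda>\<omega>. rk_path \<eta> x0 n \<omega> ^ 2)"
proof (induction n)
  case 0 then show ?case by simp
next
  case (Suc n)
  then show ?case
    using rk_path_step_moments[of \<eta> x0 n] by (auto simp: has_bochner_integral_iff)
qed

lemma rk_second_moment_tendsto:
  assumes A1: "\<bar>rk_mean_gain \<eta> h\<bar> < 1" and A2: "\<bar>rk_sq_gain \<eta> h\<bar> < 1"
  shows "(\<lambda>n. expectation (\<lambda>\<omega>. rk_path \<eta> x0 n \<omega> ^ 2)) \<longlonglongrightarrow> rk_limit_moment \<eta> h"
proof -
  define m where "m n = expectation (rk_path \<eta> x0 n)" for n
  define s where "s n = expectation (\<lambda>\<omega>. rk_path \<eta> x0 n \<omega> ^ 2)" for n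
  have m_rec: "m (Suc n) = rk_mean_gain \<eta> h * m n + rk_mean_shift \<eta> h"
    and s_rec: "s (Suc n) = rk_sq_gain \<eta> h * s n + (rk_cross \<eta> h * m n + rk_sq_shift \<eta> h)" for n
    using rk_path_step_moments[of \<eta> x0 n] rk_path_integrable[of \<eta> x0 n]
    by (auto simp: m_def s_def has_bochner_integral_iff)
  have "m \<longlonglongrightarrow> rk_mean_shift \<eta> h / (1 - rk_mean_gain \<eta> h)"
    using A1 m_rec by (intro affine_recurrence_tendsto[where f = "\<lambda>_. rk_mean_shift \<eta> h"]) auto
  then have "(\<lambda>n. rk_cross \<eta> h * m n + rk_sq_shift \<eta> h)
      \<longlonglongrightarrow> rk_cross \<eta> h * (rk_mean_shift \<eta> h / (1 - rk_mean_gain \<eta> h)) + rk_sq_shift \<eta> h"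
    by (intro tendsto_intros)
  from affine_recurrence_tendsto[OF A2 this s_rec] show ?thesis
    by (simp add: s_def rk_limit_moment_def)
qed

end

theorem mainTheorem9:
  fixes \<eta> x0 :: real
  assumes "\<eta>^2 < 2"
  shows "\<exists>mu_inf :: real \<Rightarrow> real.
    (\<forall>h>0.
       \<bar>1 - h + 1/8 * h^2 * (4 - \<eta>^4) - 1/48 * h^3 * (2 + \<eta>^2)^3\<bar> < 1 \<longrightarrow>
       \<bar>1 - h * (2 - \<eta>^2) + 1/4 * h^2 * (8 - 8 * \<eta>^2 + \<eta>^4)
          - 1/24 * h^3 * (32 - 36 * \<eta>^2 + 3 * \<eta>^6)
          + 1/192 * h^4 * (2 + \<eta>^2)^2 * (28 - 52 * \<eta>^2 + 27 * \<eta>^4)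
          - 1/96 * h^5 * (2 + \<eta>^2)^4 * (1 - 2 * \<eta>^2)
          + 1/2304 * h^6 * (2 + \<eta>^2)^6\<bar> < 1 \<longrightarrow>
       (\<forall>(M :: 'a measure) (dW :: nat \<Rightarrow> 'a \<Rightarrow> real) (dWt :: nat \<Rightarrow> 'a \<Rightarrow> real).
          prob_space M \<longrightarrow>
          (\<forall>n. distributed M lborel (dW n) (normal_density 0 (sqrt h))) \<longrightarrow>
          (\<forall>n. distributed M lborel (dWt n) (normal_density 0 (sqrt h))) \<longrightarrow>
          prob_space.indep_vars M (\<lambda>_. borel)
            (\<lambda>k. case k of Inl n \<Rightarrow> dW n | Inr n \<Rightarrow> dWt n) UNIV \<longrightarrow>
          (\<lambda>n. integral\<^sup>L M (\<lambda>\<omega>. (rk_iter \<eta> h x0 (\<lambda>k. dW k \<omega>) (\<lambda>k. dWt k \<omega>) n)^2))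
            \<longlonglongrightarrow> mu_inf h))
    \<and> (\<lambda>h. mu_inf h - 1 / (2 - \<eta>^2)) \<in> O[at_right 0](\<lambda>h. h)"
proof (intro exI[of _ "rk_limit_moment \<eta>"] conjI allI impI)
  fix h :: real and M :: "'a measure" and dW dWt :: "nat \<Rightarrow> 'a \<Rightarrow> real"
  assume "h > 0" and A1: "\<bar>1 - h + 1/8 * h^2 * (4 - \<eta>^4) - 1/48 * h^3 * (2 + \<eta>^2)^3\<bar> < 1"
    and A2: "\<bar>1 - h * (2 - \<eta>^2) + 1/4 * h^2 * (8 - 8 * \<eta>^2 + \<eta>^4)
          - 1/24 * h^3 * (32 - 36 * \<eta>^2 + 3 * \<eta>^6)
          + 1/192 * h^4 * (2 + \<eta>^2)^2 * (28 - 52 * \<eta>^2 + 27 * \<eta>^4)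
          - 1/96 * h^5 * (2 + \<eta>^2)^4 * (1 - 2 * \<eta>^2)
          + 1/2304 * h^6 * (2 + \<eta>^2)^6\<bar> < 1"
    and "prob_space M" "\<forall>n. distributed M lborel (dW n) (normal_density 0 (sqrt h))"
    "\<forall>n. distributed M lborel (dWt n) (normal_density 0 (sqrt h))"
    "prob_space.indep_vars M (\<lambda>_. borel) (\<lambda>k. case k of Inl n \<Rightarrow> dW n | Inr n \<Rightarrow> dWt n) UNIV"
  then interpret rk_gaussian_increments M h dW dWt
    by (simp add: rk_gaussian_increments_def rk_gaussian_increments_axioms_def)
  show "(\<lambda>n. integral\<^sup>L M (\<lambda>\<omega>. (rk_iter \<eta> h x0 (\<lambda>k. dW k \<omega>) (\<lambda>k. dWt k \<omega>) n)^2))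
      \<longlonglongrightarrow> rk_limit_moment \<eta> h"
    using A1 A2 by (intro rk_second_moment_tendsto) (simp_all only: rk_mean_gain_eq rk_sq_gain_eq)
next
  show "(\<lambda>h. rk_limit_moment \<eta> h - 1 / (2 - \<eta>^2)) \<in> O[at_right 0](\<lambda>h. h)"
    using rk_limit_moment_bigo[OF assms] .
qed

end
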